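(* For each integer $n \ge 0$, define $D_{a,n} = \overline{D}(-\tfrac12 + 5\cdot 2^{2n+1}, 2^{-(2n+4)})$ and $D_{b,n} = \overline{D}(-\tfrac12 + 7\cdot 2^{2n+1}, 2^{-(2n+4)})$. Then every $z \in \mathbb{Q}_2$ lying in $D_{a,n}$ or $D_{b,n}$ for some $n \ge 0$ has a bounded forward orbit under $f_1(z) = 3z^3 - \tfrac92 z^2 + 1$.
   Context: Let $|\cdot|$ denote the $2$-adic absolute value on $\mathbb{C}_2$, normalized by $|2| = 1/2$. The notation $\overline{D}(a,\delta)$ denotes the closed disk $\{z \in \mathbb{C}_2 : |z-a| \le \delta\}$. Here $f_1$ is the member with $t=1$ of the family $f_t(z) = -\tfrac32 t(-2z^3+3z^2)+1$. *)

theory Defs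
  imports "HOL-Computational_Algebra.Computational_Algebra"
begin

definition rat_abs2 :: "rat \<Rightarrow> real" where
  "rat_abs2 q = (if q = 0 then 0 else
     (case quotient_of q of (a, b) \<Rightarrow>
        2 powr (real (multiplicity (2::int) b) - real (multiplicity (2::int) a))))"

text \<open>Q_2 is characterised (up to isometric isomorphism) as a field of characteristic 0
  with a non-archimedean absolute value extending the 2-adic absolute value of Q,
  which is complete and in which Q is dense (i.e. the completion of Q w.r.t. |.|_2).\<close>
definition is_Q2_abs :: "('a::field_char_0 \<Rightarrow> real) \<Rightarrow> bool" where
  "is_Q2_abs absv \<longleftrightarrow>
     (\<forall>x. 0 \<le> absv x) \<and>
     (\<forall>x. absv x = 0 \<longleftrightarrow> x = 0) \<and>
     (\<forall>x y. absv (x * y) = absv x * absv y) \<and>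
     (\<forall>x y. absv (x + y) \<le> max (absv x) (absv y)) \<and>
     (\<forall>q. absv (of_rat q) = rat_abs2 q) \<and>
     (\<forall>X::nat \<Rightarrow> 'a. (\<forall>e>0. \<exists>N. \<forall>m\<ge>N. \<forall>n\<ge>N. absv (X m - X n) < e) \<longrightarrow>
        (\<exists>L. \<forall>e>0. \<exists>N. \<forall>n\<ge>N. absv (X n - L) < e)) \<and>
     (\<forall>x. \<forall>e>0. \<exists>q. absv (x - of_rat q) < e)"

definition cdisk :: "('a \<Rightarrow> real) \<Rightarrow> 'a::field \<Rightarrow> real \<Rightarrow> 'a set" where
  "cdisk absv a \<delta> = {z. absv (z - a) \<le> \<delta>}"

definition fam :: "'a::field_char_0 \<Rightarrow> 'a \<Rightarrow> 'a" where
  "fam t z = - (3/2) * t * (- 2 * z ^ 3 + 3 * z ^ 2) + 1"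

definition D_a :: "('a::field_char_0 \<Rightarrow> real) \<Rightarrow> nat \<Rightarrow> 'a set" where
  "D_a absv n = cdisk absv (- 1/2 + 5 * 2 ^ (2*n+1)) (1 / 2 ^ (2*n+4))"

definition D_b :: "('a::field_char_0 \<Rightarrow> real) \<Rightarrow> nat \<Rightarrow> 'a set" where
  "D_b absv n = cdisk absv (- 1/2 + 7 * 2 ^ (2*n+1)) (1 / 2 ^ (2*n+4))"

end

theory Submission
  imports Defs
begin

text \<open>Write \<open>f = fam 1\<close> and \<open>w = z + 1/2\<close>. The set of points with \<open>|z| \<le> 1\<close>, or with
  \<open>|w| = 2^-(2k+1)\<close> for some \<open>k\<close>, or with \<open>w = 0\<close> is forward invariant under \<open>f\<close>, and on it
  \<open>|z| \<le> 2\<close>. Near the fixed point \<open>-1/2\<close> we have \<open>f(z) + 1/2 = 27/4 w + O(w^2)\<close> with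
  \<open>|27/4| = 4\<close>, so each step lowers the odd exponent by two until \<open>|w| = 1/2\<close>, from where one
  more step lands in the unit disk. On the unit disk, either \<open>|z| \<le> 1/2\<close> and \<open>|f(z)| \<le> 1\<close>, or
  \<open>z \<equiv> 1\<close> and \<open>f(z) + 1/2 = 3/2 (z - 1)^2 (2z + 1)\<close> has absolute value \<open>2 |z - 1|^2\<close>, again an
  odd power of \<open>1/2\<close>. The disks \<open>D_a n\<close> and \<open>D_b n\<close> consist of points with \<open>|w| = 2^-(2n+1)\<close>.\<close>

locale nonarch_abs =
  fixes absv :: "'a::field \<Rightarrow> real"
  assumes abs_nonneg: "0 \<le> absv x"
    and abs_eq_0_iff: "absv x = 0 \<longleftrightarrow> x = 0"
    and abs_mult: "absv (x * y) = absv x * absv y"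
    and abs_add_le_max: "absv (x + y) \<le> max (absv x) (absv y)"
begin

lemma abs_zero [simp]: "absv 0 = 0"
  using abs_eq_0_iff by simp

lemma abs_pos: "x \<noteq> 0 \<Longrightarrow> 0 < absv x"
  using abs_nonneg abs_eq_0_iff by (metis less_eq_real_def)

lemma abs_one [simp]: "absv 1 = 1"
proof -
  have "absv 1 = absv 1 * absv 1" using abs_mult[of 1 1] by simp
  moreover have "absv 1 \<noteq> 0" using abs_eq_0_iff by simp
  ultimately show ?thesis by simp
qed

lemma abs_minus [simp]: "absv (- x) = absv x"
proof -
  have "absv (-1) * absv (-1) = 1" using abs_mult[of "-1" "-1"] by simp
  with abs_nonneg[of "-1"] have "absv (-1) = 1"
    by (metis mult_cancel_right1 mult_le_cancel_left1 mult_less_cancel_left2 nle_le not_le zero_less_one)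
  then show ?thesis using abs_mult[of "-1" x] by simp
qed

lemma abs_diff_le_max: "absv (x - y) \<le> max (absv x) (absv y)"
  using abs_add_le_max[of x "-y"] by simp

lemma abs_add_eq_left: assumes "absv y < absv x" shows "absv (x + y) = absv x"
proof -
  have "absv x \<le> max (absv (x + y)) (absv y)"
    using abs_add_le_max[of "x + y" "-y"] by simp
  with assms abs_add_le_max[of x y] show ?thesis by auto
qed

lemma abs_power: "absv (x ^ n) = absv x ^ n"
  by (induction n) (simp_all add: abs_mult)

lemma abs_divide: "absv (x / y) = absv x / absv y"
proof (cases "y = 0")
  case False
  have "absv (x / y) * absv y = absv x" using abs_mult[of "x / y" y] False by simp
  then show ?thesis using abs_pos[OF False] by (simp add: field_simps)
qed simp

lemma abs_of_nat_le_one: "absv (of_nat n) \<le> 1"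
proof (induction n)
  case (Suc n)
  then show ?case using abs_add_le_max[of 1 "of_nat n"] by simp
qed simp

lemma abs_of_int_le_one: "absv (of_int n) \<le> 1"
  using abs_of_nat_le_one[of "nat \<bar>n\<bar>"] abs_minus[of "of_nat (nat (- n))"]
  by (cases "n \<ge> 0") simp_all

end

locale q2_abs = nonarch_abs absv for absv :: "'a::field_char_0 \<Rightarrow> real" +
  assumes abs_of_rat: "absv (of_rat q) = rat_abs2 q"
    and rat_dense: "0 < e \<Longrightarrow> \<exists>q. absv (x - of_rat q) < e"
begin

lemma abs_two [simp]: "absv 2 = 1/2"
proof -
  have "absv 2 = rat_abs2 2" using abs_of_rat[of 2] by simp
  also have "\<dots> = 1/2" unfolding rat_abs2_def by (simp add: multiplicity_self powr_minus)
  finally show ?thesis .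
qed

lemma abs_four [simp]: "absv 4 = 1/4"
  using abs_mult[of 2 2] by simp

lemma abs_of_int_even: "even n \<Longrightarrow> absv (of_int n) \<le> 1/2"
  using abs_of_int_le_one by (auto simp: abs_mult)

lemma abs_of_int_odd: assumes "odd n" shows "absv (of_int n) = 1"
proof -
  obtain m where "n = 1 + 2 * m" using assms by (metis oddE add.commute)
  moreover have "absv (of_int (2 * m) :: 'a) < 1" using abs_of_int_even[of "2 * m"] by simp
  ultimately show ?thesis using abs_add_eq_left[of "of_int (2 * m)" 1] by simp
qed

lemma abs_numeral_odd [simp]: "odd (numeral n :: int) \<Longrightarrow> absv (numeral n) = 1"
  using abs_of_int_odd[of "numeral n"] by simp

lemma abs_approx_by_rat:
  assumes "x \<noteq> 0"
  obtains q where "absv (x - of_rat q) < absv x" and "absv (of_rat q) = absv x"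
proof -
  obtain q where q: "absv (x - of_rat q) < absv x" using rat_dense abs_pos[OF assms] by blast
  have "absv (x + - (x - of_rat q)) = absv x"
    using q abs_minus[of "x - of_rat q"] by (intro abs_add_eq_left) simp
  with q that show ?thesis by simp
qed

lemma abs_le_one_eq_power_half:
  assumes "x \<noteq> 0" and "absv x \<le> 1"
  shows "\<exists>m. absv x = (1/2) ^ m"
proof -
  obtain q where q: "absv (of_rat q) = absv x" using abs_approx_by_rat[OF assms(1)] by blast
  obtain a b where ab: "quotient_of q = (a, b)" by (cases "quotient_of q")
  have "q \<noteq> 0" using q assms(1) by (auto simp: abs_eq_0_iff)
  define m where "m = multiplicity 2 a - multiplicity (2::int) b"
  have x: "absv x = 2 powr (real (multiplicity 2 b) - real (multiplicity (2::int) a))"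
    using q ab \<open>q \<noteq> 0\<close> abs_of_rat unfolding rat_abs2_def by simp
  with assms(2) have "(2::real) powr (real (multiplicity 2 b) - real (multiplicity (2::int) a))
      \<le> 2 powr 0" by simp
  then have "multiplicity (2::int) b \<le> multiplicity 2 a"
    by (subst (asm) powr_le_cancel_iff) simp_all
  then have "absv x = 2 powr (- real m)" using x by (simp add: m_def of_nat_diff)
  then have "absv x = (1/2) ^ m"
    by (simp add: powr_minus powr_realpow power_one_over inverse_eq_divide)
  then show ?thesis ..
qed

lemma abs_less_one_imp_le_half: assumes "absv x < 1" shows "absv x \<le> 1/2"
proof (cases "x = 0")
  case False
  then obtain m where m: "absv x = (1/2) ^ m" using abs_le_one_eq_power_half assms by force
  with assms have "m \<noteq> 0" by (cases m) auto
  then have "absv x \<le> (1/2) ^ 1" unfolding m by (intro power_decreasing) auto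
  then show ?thesis by simp
qed simp

lemma abs_of_int_eq_one_iff: "absv (of_int n) = 1 \<longleftrightarrow> odd n"
proof
  show "absv (of_int n) = 1 \<Longrightarrow> odd n" using abs_of_int_even[of n] by fastforce
qed (rule abs_of_int_odd)

lemma abs_of_rat_unit_sub_one:
  assumes "absv (of_rat q) = 1" shows "absv (of_rat q - 1) \<le> 1/2"
proof -
  obtain a b where ab: "quotient_of q = (a, b)" by (cases "quotient_of q")
  have "b > 0" using quotient_of_denom_pos[OF ab] .
  have q: "(of_rat q :: 'a) = of_int a / of_int b"
    using quotient_of_div[OF ab] by (simp add: of_rat_divide)
  have "of_int b \<noteq> (0 :: 'a)" using \<open>b > 0\<close> by simp
  then have "absv (of_int a :: 'a) = absv (of_int b)"
    using assms abs_pos unfolding q abs_divide by (simp add: field_simps)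
  moreover have "odd a \<or> odd b"
    using coprime_common_divisor[OF quotient_of_coprime[OF ab], of 2] by auto
  ultimately have "odd a" "odd b" by (auto simp flip: abs_of_int_eq_one_iff)
  then have "absv (of_int (a - b) :: 'a) \<le> 1/2" by (intro abs_of_int_even) simp
  moreover have "(of_rat q :: 'a) - 1 = of_int (a - b) / of_int b"
    using q \<open>of_int b \<noteq> 0\<close> by (simp add: field_simps)
  ultimately show ?thesis using abs_of_int_odd[OF \<open>odd b\<close>] by (simp add: abs_divide)
qed

lemma abs_unit_sub_one: assumes "absv u = 1" shows "absv (u - 1) \<le> 1/2"
proof -
  obtain q where q: "absv (u - of_rat q) < 1" "absv (of_rat q) = 1"
    using abs_approx_by_rat[of u] assms by force
  have "u - 1 = (u - of_rat q) + (of_rat q - 1)" by simp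
  then have "absv (u - 1) \<le> max (absv (u - of_rat q)) (absv (of_rat q - 1))"
    by (metis abs_add_le_max)
  with abs_less_one_imp_le_half[OF q(1)] abs_of_rat_unit_sub_one[OF q(2)] show ?thesis
    by simp
qed

lemma abs_le_one_cases:
  assumes "absv z \<le> 1" shows "absv z \<le> 1/2 \<or> absv (z - 1) \<le> 1/2"
proof (cases "absv z = 1")
  case False
  with assms show ?thesis using abs_less_one_imp_le_half by simp
qed (use abs_unit_sub_one in blast)

end

lemma fam1_eq: "fam 1 z = 1 + 3/2 * z^2 * (2*z - 3 :: 'a::field_char_0)"
  by (simp add: fam_def field_simps power2_eq_square power3_eq_cube)

lemma fam1_add_half_eq: "fam 1 z + 1/2 = 3/2 * (z - 1)^2 * (2*z + 1 :: 'a::field_char_0)"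
  by (simp add: fam_def field_simps power2_eq_square power3_eq_cube)

lemma fam1_minus_half_add_half_eq:
  "fam 1 (w - 1/2) + 1/2 = 27/4 * w + (3*w^3 - 9*w^2 :: 'a::field_char_0)"
  by (simp add: fam_def field_simps power2_eq_square power3_eq_cube)

text \<open>For \<open>|w| = 1/2\<close> the linear part \<open>27/4 w - 1/2\<close> has absolute value \<open>2\<close>; rewriting it
  as \<open>(27 (w/2 - 1) + 26)/2\<close> exposes the cancellation, since \<open>w/2\<close> is a unit and \<open>26\<close> is even.\<close>

lemma fam1_minus_half_eq:
  "fam 1 (w - 1/2) = (27 * (w/2 - 1) + 26) / 2 + (3*w^3 - 9*w^2 :: 'a::field_char_0)"
  by (simp add: fam_def field_simps power2_eq_square power3_eq_cube)

context q2_abs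
begin

lemma abs_fam1_le_one: assumes "absv z \<le> 1/2" shows "absv (fam 1 z) \<le> 1"
proof -
  have "absv (2*z - 3) \<le> 1" using abs_diff_le_max[of "2*z" 3] assms by (simp add: abs_mult)
  then have "absv z ^ 2 * absv (2*z - 3) \<le> (1/2) ^ 2 * 1"
    using assms abs_nonneg by (intro mult_mono power_mono) auto
  moreover have "absv (3/2 * z^2 * (2*z - 3)) = 2 * (absv z ^ 2 * absv (2*z - 3))"
    by (simp add: abs_mult abs_divide abs_power)
  ultimately have "absv (3/2 * z^2 * (2*z - 3)) \<le> 1" by (simp add: power2_eq_square)
  then show ?thesis
    unfolding fam1_eq using abs_add_le_max[of 1 "3/2 * z^2 * (2*z - 3)"] by simp
qed

lemma abs_fam1_add_half_near_one:
  assumes "absv (z - 1) \<le> 1/2" shows "absv (fam 1 z + 1/2) = 2 * absv (z - 1) ^ 2"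
proof -
  have "absv (2 * (z - 1)) = absv (z - 1) / 2" using abs_mult[of 2 "z - 1"] by simp
  moreover have "absv (3::'a) = 1" by simp
  ultimately have "absv (3 + 2 * (z - 1)) = 1" using assms abs_add_eq_left[of "2 * (z - 1)" 3]
    by linarith
  moreover have "3 + 2 * (z - 1) = 2*z + 1" by (simp add: algebra_simps)
  ultimately have "absv (2*z + 1) = 1" by metis
  then show ?thesis unfolding fam1_add_half_eq by (simp add: abs_mult abs_divide abs_power)
qed

lemma abs_cubic_tail_le: assumes "absv w \<le> 1" shows "absv (3*w^3 - 9*w^2) \<le> absv w ^ 2"
proof -
  have "absv w ^ 3 \<le> absv w ^ 2" using assms abs_nonneg by (intro power_decreasing) auto
  then show ?thesis using abs_diff_le_max[of "3*w^3" "9*w^2"] by (simp add: abs_mult abs_power)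
qed

lemma abs_fam1_minus_half_le_one:
  assumes "absv w = 1/2" shows "absv (fam 1 (w - 1/2)) \<le> 1"
proof -
  have "absv (w/2) = 1" using assms by (simp add: abs_divide)
  then have "absv (w/2 - 1) \<le> 1/2" by (rule abs_unit_sub_one)
  moreover have "absv (27 * (w/2 - 1)) = absv (w/2 - 1)" by (simp only: abs_mult) simp
  ultimately have "absv (27 * (w/2 - 1)) \<le> 1/2" by simp
  moreover have "absv (26::'a) \<le> 1/2" using abs_of_int_even[of 26] by simp
  ultimately have "absv (27 * (w/2 - 1) + 26) \<le> 1/2"
    using abs_add_le_max[of "27 * (w/2 - 1)" 26] by simp
  then have "absv ((27 * (w/2 - 1) + 26) / 2) \<le> 1" by (simp add: abs_divide)
  moreover have "absv (3*w^3 - 9*w^2) \<le> 1" using abs_cubic_tail_le[of w] assms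
    by (simp add: power2_eq_square)
  ultimately show ?thesis unfolding fam1_minus_half_eq
    using abs_add_le_max[of "(27 * (w/2 - 1) + 26) / 2" "3*w^3 - 9*w^2"] by simp
qed

lemma abs_fam1_minus_half_add_half:
  assumes "w \<noteq> 0" and "absv w \<le> 1"
  shows "absv (fam 1 (w - 1/2) + 1/2) = 4 * absv w"
proof -
  have "absv w ^ 2 < 4 * absv w" using abs_pos[OF assms(1)] assms(2)
    by (simp add: power2_eq_square mult_le_cancel_right1)
  then have "absv (3*w^3 - 9*w^2) < absv (27/4 * w)"
    using abs_cubic_tail_le[OF assms(2)] by (simp add: abs_mult abs_divide)
  then show ?thesis unfolding fam1_minus_half_add_half_eq
    by (simp add: abs_add_eq_left abs_mult abs_divide)
qed

lemma abs_add_half_in_disks: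
  assumes "z \<in> D_a absv n \<or> z \<in> D_b absv n"
  shows "absv (z + 1/2) = (1/2) ^ (2*n + 1)"
proof -
  obtain c :: 'a where c: "c = 5 \<or> c = 7"
    and "z \<in> cdisk absv (- 1/2 + c * 2^(2*n+1)) (1 / 2^(2*n+4))"
    using assms unfolding D_a_def D_b_def by blast
  then have near: "absv (z - (- 1/2 + c * 2^(2*n+1))) \<le> 1 / 2^(2*n+4)"
    unfolding cdisk_def by simp
  have "absv c = 1" using c by auto
  then have center: "absv (c * 2^(2*n+1)) = (1/2) ^ (2*n+1)"
    by (simp add: abs_mult abs_power power_one_over)
  have "(1::real) / 2^(2*n+4) < (1/2) ^ (2*n+1)"
    by (simp add: power_add power_one_over field_simps)
  then have "absv (z - (- 1/2 + c * 2^(2*n+1))) < absv (c * 2^(2*n+1))"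
    using near center by linarith
  then have "absv (c * 2^(2*n+1) + (z - (- 1/2 + c * 2^(2*n+1)))) = (1/2) ^ (2*n+1)"
    using center by (simp only: abs_add_eq_left)
  moreover have "c * 2^(2*n+1) + (z - (- 1/2 + c * 2^(2*n+1))) = z + 1/2" by simp
  ultimately show ?thesis by simp
qed

definition trapped :: "'a \<Rightarrow> bool" where
  "trapped z \<longleftrightarrow> absv z \<le> 1 \<or> (\<exists>k. absv (z + 1/2) = (1/2) ^ (2*k + 1)) \<or> z = -1/2"

lemma trapped_abs_le_two: assumes "trapped z" shows "absv z \<le> 2"
proof -
  have bound: "absv z \<le> max (absv (z + 1/2)) 2"
    using abs_diff_le_max[of "z + 1/2" "1/2"] by (simp add: abs_divide)
  consider "absv z \<le> 1" | k where "absv (z + 1/2) = (1/2) ^ (2*k + 1)" | "z = -1/2"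
    using assms unfolding trapped_def by blast
  then show ?thesis
  proof cases
    case (2 k)
    have "(1/2::real) ^ (2*k + 1) \<le> 1" by (rule power_le_one) simp_all
    with 2 bound show ?thesis by (simp add: max_def)
  qed (simp_all add: abs_divide)
qed

lemma trapped_fam1_of_abs_le_one: assumes "absv z \<le> 1" shows "trapped (fam 1 z)"
proof (cases "absv z \<le> 1/2")
  case True
  then show ?thesis unfolding trapped_def using abs_fam1_le_one by blast
next
  case False
  then have near: "absv (z - 1) \<le> 1/2" using abs_le_one_cases[OF assms] by blast
  show ?thesis
  proof (cases "z = 1")
    case True
    then show ?thesis unfolding trapped_def by (simp add: fam_def)
  next
    case False
    then obtain m where m: "absv (z - 1) = (1/2) ^ m" using abs_le_one_eq_power_half near by force
    with near obtain j where "m = Suc j" by (cases m) auto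
    have "absv (fam 1 z + 1/2) = 2 * ((1/2) ^ Suc j) ^ 2"
      using abs_fam1_add_half_near_one[OF near] unfolding m \<open>m = Suc j\<close> .
    also have "\<dots> = (1/2) ^ (2*j + 1)" by (simp add: power_even_eq power_divide)
    finally show ?thesis unfolding trapped_def by blast
  qed
qed

lemma trapped_fam1_of_odd_power:
  assumes "absv (z + 1/2) = (1/2) ^ (2*k + 1)" shows "trapped (fam 1 z)"
proof -
  define w where "w = z + 1/2"
  have z: "z = w - 1/2" and w: "absv w = (1/2) ^ (2*k + 1)" using assms by (simp_all add: w_def)
  show ?thesis
  proof (cases k)
    case 0
    then show ?thesis using abs_fam1_minus_half_le_one w unfolding z trapped_def by simp
  next
    case (Suc j)
    have "absv w \<le> 1" unfolding w by (rule power_le_one) simp_all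
    moreover have "w \<noteq> 0" using w by auto
    ultimately have "absv (fam 1 z + 1/2) = 4 * absv w"
      unfolding z by (intro abs_fam1_minus_half_add_half)
    also have "\<dots> = (1/2) ^ (2*j + 1)" unfolding w Suc by simp
    finally show ?thesis unfolding trapped_def by blast
  qed
qed

lemma trapped_fam1: assumes "trapped z" shows "trapped (fam 1 z)"
proof -
  have "fam 1 (-1/2 :: 'a) = -1/2" by (simp add: fam_def field_simps)
  then show ?thesis using assms trapped_fam1_of_abs_le_one trapped_fam1_of_odd_power
    unfolding trapped_def by blast
qed

end

theorem mainTheorem9:
  fixes absv :: "'a::field_char_0 \<Rightarrow> real" and z :: 'a
  assumes "is_Q2_abs absv"
    and "\<exists>n::nat. z \<in> D_a absv n \<or> z \<in> D_b absv n"
  shows "\<exists>B. \<forall>k::nat. absv ((fam 1 ^^ k) z) \<le> B"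
proof -
  interpret q2_abs absv
    using assms(1) unfolding is_Q2_abs_def by unfold_locales blast+
  obtain n where "z \<in> D_a absv n \<or> z \<in> D_b absv n" using assms(2) by blast
  then have "trapped z" unfolding trapped_def using abs_add_half_in_disks by blast
  then have "trapped ((fam 1 ^^ k) z)" for k by (induction k) (simp_all add: trapped_fam1)
  then show ?thesis using trapped_abs_le_two by blast
qed

end
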